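(* Let $M$ be a totally ordered finite monoid and $P\subseteq M^3$ an edge selector. Then for every $d\in\mathbb{N}$, there is no bad forest path of length greater than $2$ all of whose members belong to $\mathrm{Reg}_d$.
   Context: For $m$ in a monoid $M$, $J(m)=\{xmy:x,y\in M\}$; $M$ is totally ordered if for all $a,b$, $J(ab)=J(a)$ or $J(ab)=J(b)$. $e\in M$ is idempotent if $e^2=e$. A monoid-labelled graph over $M$ is a tuple $\mathcal{G}=(m,V,E,\lambda)$ with $m\in M$ (the evaluation of $\mathcal{G}$), $V$ a finite vertex set, $E\colon V\times V\to(M^2\to\{\top,\bot\})$ and $\lambda\colon V\to M^2$ such that $\lambda(x)=(l_x,r_x)$ satisfies $l_xr_x=m$ for all $x$. For $a,b\in M$, $a\mathcal{G}b$ has the same vertices, evaluation $amb$, labels $(al_x,r_xb)$ and edge function $(x,y)\mapsto((s,t)\mapsto E(x,y)(sa,bt))$. The downcasting $\mathrm{dc}(\mathcal{G})$ is the graph on $V$ in which distinct $x,y$ are adjacent iff $E(x,y)(1_M,1_M)=\top$. An edge selector is a fixed set $P\subseteq M^3$. The binary product $\mathcal{G}_1\odot\mathcal{G}_2$ of $\mathcal{G}_i=(m_i,V_i,E_i,\lambda_i)$ has vertex set $V_1\sqcup V_2$, evaluation $m_1m_2$, label $(l_x,r_xm_2)$ for $x\in V_1$ with $\lambda_1(x)=(l_x,r_x)$, label $(m_1l_y,r_y)$ for $y\in V_2$ with $\lambda_2(y)=(l_y,r_y)$, edge function $E_1(x,x')(s,m_2t)$ on $V_1$, $E_2(y,y')(sm_1,t)$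 on $V_2$, and for $x\in V_1,y\in V_2$: $E(x,y)(s,t)=E(y,x)(s,t)=\top$ iff $(sl_x,r_xl_y,r_yt)\in P$. This product is associative. For a finite nonempty sequence $\mathcal{G}_1,\dots,\mathcal{G}_n$ all evaluating to the same idempotent $e$, the idempotent product $\bigodot_i\mathcal{G}_i$ is $\mathcal{G}_1\odot\cdots\odot\mathcal{G}_n$. $\mathrm{Reg}_0$ is the class of monoid-labelled graphs with one vertex; $\mathrm{Reg}_{k+1}$ consists of all $\mathcal{G}_1\odot\mathcal{G}_2$ with $\mathcal{G}_1,\mathcal{G}_2\in\mathrm{Reg}_k$ and all idempotent products of finite nonempty sequences in $\mathrm{Reg}_k$ evaluating to a common idempotent. A sequence $\mathcal{G}_1,\dots,\mathcal{G}_n$ all evaluating to an idempotent $e$ (length $n$) is a good forest path if for all $a,b\in M$ there is a sequence $\mathcal{H}_1,\dots,\mathcal{H}_k$ of monoid-labelled graphs evaluating to $e$ and a graph embedding $h$ from $\mathrm{dc}(a(\bigodot_i\mathcal{G}_i)b)$ to $\mathrm{dc}(a(\bigodot_j\mathcal{H}_j)b)$ such that: $h$ maps each vertex $x$ of $\mathcal{G}_i$ to a vertex of some $\mathcal{H}_j$ carrying the same label in $\mathcal{H}_j$ as $x$ has in $\mathcal{G}_i$; $h$ maps $\mathcal{G}_1$ into $\mathcal{H}_1$ and $\mathcal{G}_n$ into $\mathcal{H}_k$; and some $\mathcal{H}_j$ contains no vertex of the image of $h$. Otherwise it is a bad forest path. Graph embeddings are injective maps with $\{h(u),h(v)\}$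 an edge iff $\{u,v\}$ is. *)

theory Defs
  imports Main
begin

text \<open>Monoid-labelled graphs over a monoid 'm. Vertices are drawn from the countably
infinite type nat list; disjoint unions are realised by tagging with 0 # _ / 1 # _.\<close>

record 'm mlg =
  ev   :: 'm
  verts :: "nat list set"
  edg  :: "nat list \<Rightarrow> nat list \<Rightarrow> 'm \<Rightarrow> 'm \<Rightarrow> bool"
  lab  :: "nat list \<Rightarrow> 'm \<times> 'm"

definition Jideal :: "'m::monoid_mult \<Rightarrow> 'm set" where
  "Jideal m = {x * m * y | x y. True}"

definition totally_ordered_monoid :: "'m::monoid_mult itself \<Rightarrow> bool" where
  "totally_ordered_monoid _ \<longleftrightarrow>
     (\<forall>a b :: 'm. Jideal (a * b) = Jideal a \<or> Jideal (a * b) = Jideal b)"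

definition wf_mlg :: "'m::monoid_mult mlg \<Rightarrow> bool" where
  "wf_mlg G \<longleftrightarrow> finite (verts G) \<and>
     (\<forall>x\<in>verts G. fst (lab G x) * snd (lab G x) = ev G)"

definition act :: "'m::monoid_mult \<Rightarrow> 'm mlg \<Rightarrow> 'm \<Rightarrow> 'm mlg" where
  "act a G b = \<lparr> ev = a * ev G * b, verts = verts G,
     edg = (\<lambda>x y s t. edg G x y (s * a) (b * t)),
     lab = (\<lambda>x. (a * fst (lab G x), snd (lab G x) * b)) \<rparr>"

definition dc_adj :: "'m::monoid_mult mlg \<Rightarrow> nat list \<Rightarrow> nat list \<Rightarrow> bool" where
  "dc_adj G x y \<longleftrightarrow> x \<noteq> y \<and> edg G x y 1 1"

definition dc_embedding :: "'m::monoid_mult mlg \<Rightarrow> 'm mlg \<Rightarrow> (nat list \<Rightarrow> nat list) \<Rightarrow> bool" where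
  "dc_embedding G H h \<longleftrightarrow>
     (\<forall>x\<in>verts G. h x \<in> verts H) \<and> inj_on h (verts G) \<and>
     (\<forall>x\<in>verts G. \<forall>y\<in>verts G. dc_adj G x y \<longleftrightarrow> dc_adj H (h x) (h y))"

definition bprod :: "('m::monoid_mult \<times> 'm \<times> 'm) set \<Rightarrow> 'm mlg \<Rightarrow> 'm mlg \<Rightarrow> 'm mlg" where
  "bprod P G1 G2 = \<lparr> ev = ev G1 * ev G2,
     verts = (Cons 0) ` verts G1 \<union> (Cons 1) ` verts G2,
     edg = (\<lambda>v w s t.
        if hd v = 0 \<and> hd w = 0 then edg G1 (tl v) (tl w) s (ev G2 * t)
        else if hd v = 1 \<and> hd w = 1 then edg G2 (tl v) (tl w) (s * ev G1) t
        else if hd v = 0 \<and> hd w = 1 then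
          (s * fst (lab G1 (tl v)), snd (lab G1 (tl v)) * fst (lab G2 (tl w)),
           snd (lab G2 (tl w)) * t) \<in> P
        else if hd v = 1 \<and> hd w = 0 then
          (s * fst (lab G1 (tl w)), snd (lab G1 (tl w)) * fst (lab G2 (tl v)),
           snd (lab G2 (tl v)) * t) \<in> P
        else False),
     lab = (\<lambda>v. if hd v = 0 then (fst (lab G1 (tl v)), snd (lab G1 (tl v)) * ev G2)
                else (ev G1 * fst (lab G2 (tl v)), snd (lab G2 (tl v)))) \<rparr>"

text \<open>Iterated product G1 \<odot> (G2 \<odot> (... \<odot> Gn)) of a nonempty list (associativity
  makes the bracketing irrelevant up to isomorphism).\<close>
fun iprod :: "('m::monoid_mult \<times> 'm \<times> 'm) set \<Rightarrow> 'm mlg list \<Rightarrow> 'm mlg" where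
  "iprod P [] = undefined"
| "iprod P [G] = G"
| "iprod P (G # H # Gs) = bprod P G (iprod P (H # Gs))"

text \<open>vpos n i x: the vertex of the iterated product of a list of length n that
  corresponds to vertex x of the i-th factor (0-based).\<close>
fun vpos :: "nat \<Rightarrow> nat \<Rightarrow> nat list \<Rightarrow> nat list" where
  "vpos 0 i x = x"
| "vpos (Suc 0) i x = x"
| "vpos (Suc (Suc n)) 0 x = 0 # x"
| "vpos (Suc (Suc n)) (Suc i) x = 1 # vpos (Suc n) i x"

fun Reg :: "('m::monoid_mult \<times> 'm \<times> 'm) set \<Rightarrow> nat \<Rightarrow> 'm mlg set" where
  "Reg P 0 = {G. wf_mlg G \<and> card (verts G) = 1}"
| "Reg P (Suc k) =
     {bprod P G1 G2 | G1 G2. G1 \<in> Reg P k \<and> G2 \<in> Reg P k} \<union>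
     {iprod P Gs | Gs. Gs \<noteq> [] \<and> set Gs \<subseteq> Reg P k \<and>
        (\<exists>e. e * e = e \<and> (\<forall>G\<in>set Gs. ev G = e))}"

definition forest_path :: "'m::monoid_mult mlg list \<Rightarrow> bool" where
  "forest_path Gs \<longleftrightarrow> Gs \<noteq> [] \<and> (\<forall>G\<in>set Gs. wf_mlg G) \<and>
     (\<exists>e. e * e = e \<and> (\<forall>G\<in>set Gs. ev G = e))"

definition good_forest_path :: "('m::monoid_mult \<times> 'm \<times> 'm) set \<Rightarrow> 'm mlg list \<Rightarrow> bool" where
  "good_forest_path P Gs \<longleftrightarrow>
    (let n = length Gs; e = ev (hd Gs) in
     \<forall>a b. \<exists>Hs h. let k = length Hs in
       Hs \<noteq> [] \<and> (\<forall>H\<in>set Hs. wf_mlg H \<and> ev H = e) \<and>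
       dc_embedding (act a (iprod P Gs) b) (act a (iprod P Hs) b) h \<and>
       (\<forall>i<n. \<forall>x\<in>verts (Gs ! i). \<exists>j<k. \<exists>y\<in>verts (Hs ! j).
           h (vpos n i x) = vpos k j y \<and> lab (Hs ! j) y = lab (Gs ! i) x) \<and>
       (\<forall>x\<in>verts (Gs ! 0). \<exists>y\<in>verts (Hs ! 0). h (vpos n 0 x) = vpos k 0 y) \<and>
       (\<forall>x\<in>verts (Gs ! (n - 1)). \<exists>y\<in>verts (Hs ! (k - 1)).
           h (vpos n (n - 1) x) = vpos k (k - 1) y) \<and>
       (\<exists>j<k. \<forall>y\<in>verts (Hs ! j). vpos k j y \<notin> h ` verts (iprod P Gs)))"

definition bad_forest_path :: "('m::monoid_mult \<times> 'm \<times> 'm) set \<Rightarrow> 'm mlg list \<Rightarrow> bool" where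
  "bad_forest_path P Gs \<longleftrightarrow> forest_path Gs \<and> \<not> good_forest_path P Gs"

end

theory Submission
  imports Defs
begin

text \<open>Every graph of Reg P d is described by a word: its vertices come in a linear order, each
vertex x carrying a factorisation l_x r_x of its letter, so that labels are prefix and suffix
products and an edge is decided by applying P to the triple obtained by splitting the product at
the two letters. Let such a graph G evaluate to an idempotent e of a totally ordered monoid. Since
e lies in \<open>J(e)\<close>, some letter next to a cut of the word lies in \<open>J(e)\<close>; in a finite monoid
this makes the label halves facing the cut absorb e, and makes every product spanning the cut
regular enough that an e may be inserted at the cut. Hence, inside any product, G may be replaced
by its part before the cut, a vertex-less graph evaluating to e, and its part after the cut. Doing
this to the second member of the path gives an embedding whose image misses the vertex-less
factor.\<close>

section \<open>Finite monoids and J-ideals\<close>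

lemma power_sandwich:
  fixes x g y :: "'m::monoid_mult"
  assumes "g = x * g * y"
  shows "g = x ^ k * g * y ^ k"
proof (induction k)
  case (Suc k)
  have "x ^ Suc k * g * y ^ Suc k = x ^ k * (x * g * y) * y ^ k"
    by (simp only: power_Suc2[of x] power_Suc[of y] mult.assoc)
  then show ?case using Suc assms by simp
qed simp

lemma sandwich_absorb:
  fixes x g y :: "'m::{monoid_mult,finite}"
  assumes "g = x * g * y"
  shows "\<exists>u. g = u * x * g" and "\<exists>v. g = g * y * v"
proof -
  have "\<not> inj (\<lambda>k::nat. (x ^ k, y ^ k))"
    using finite_imageD[of "\<lambda>k::nat. (x ^ k, y ^ k)" UNIV] by auto
  then obtain i j where "i < j" "x ^ i = x ^ j" "y ^ i = y ^ j"
    unfolding inj_def by (metis linorder_neqE_nat prod.inject)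
  moreover obtain d where "j = Suc i + d" using \<open>i < j\<close> le_Suc_ex by (metis Suc_leI)
  ultimately have d: "x ^ i = x ^ i * x * x ^ d" "y ^ i = y ^ i * y * y ^ d"
    by (simp_all only: power_add power_Suc2)
  have gi: "g = x ^ i * g * y ^ i" using power_sandwich[OF assms] .
  have "g = g * y * y ^ d"
    using d(2) gi by (metis mult.assoc)
  then show "\<exists>v. g = g * y * v" by blast
  have "x ^ i * x * x ^ d = x ^ d * x * x ^ i"
    by (simp add: power_commutes mult.assoc add.commute flip: power_Suc2 power_add)
  then have "g = x ^ d * x * g"
    using d(1) gi by (metis mult.assoc)
  then show "\<exists>u. g = u * x * g" by blast
qed

lemma Jideal_iff: "z \<in> Jideal m \<longleftrightarrow> (\<exists>x y. z = x * m * y)"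
  unfolding Jideal_def by auto

lemma Jideal_self: "m \<in> Jideal (m::'m::monoid_mult)"
  unfolding Jideal_iff by (metis mult_1 mult_1_right)

lemma Jideal_mult:
  fixes m :: "'m::monoid_mult"
  assumes "z \<in> Jideal m"
  shows "x * z * y \<in> Jideal m"
proof -
  obtain p q where "z = p * m * q" using assms unfolding Jideal_iff by blast
  then have "x * z * y = (x * p) * m * (q * y)" by (simp add: mult.assoc)
  then show ?thesis unfolding Jideal_iff by blast
qed

lemma Jideal_mult_left: "z \<in> Jideal m \<Longrightarrow> x * z \<in> Jideal (m::'m::monoid_mult)"
  using Jideal_mult[of z m x 1] by simp

lemma Jideal_mult_right: "z \<in> Jideal m \<Longrightarrow> z * y \<in> Jideal (m::'m::monoid_mult)"
  using Jideal_mult[of z m 1 y] by simp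

lemma Jideal_mono: "z \<in> Jideal m \<Longrightarrow> Jideal z \<subseteq> Jideal (m::'m::monoid_mult)"
  by (auto simp: Jideal_iff[of _ z] intro: Jideal_mult)

lemma totally_ordered_Jideal_factor:
  fixes x y m :: "'m::monoid_mult"
  assumes "totally_ordered_monoid TYPE('m)" and "x * y \<in> Jideal m"
  shows "x \<in> Jideal m \<or> y \<in> Jideal m"
  using assms Jideal_mono[OF assms(2)] Jideal_self[of x] Jideal_self[of y]
  unfolding totally_ordered_monoid_def by blast

lemma Jideal_left_stable:
  fixes e l r :: "'m::{monoid_mult,finite}"
  assumes "e * e = e" and "l * r = e" and "l \<in> Jideal e"
  shows "e * l = l"
proof -
  obtain p q where "l = p * (l * r) * q" using assms(2,3) unfolding Jideal_iff by blast
  then obtain v where "l = l * (r * q) * v"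
    using sandwich_absorb(2)[of l p "r * q"] by (auto simp: mult.assoc)
  then have "l = e * (q * v)" using assms(2) by (metis mult.assoc)
  then show ?thesis using assms(1) by (metis mult.assoc)
qed

lemma Jideal_right_stable:
  fixes e l r :: "'m::{monoid_mult,finite}"
  assumes "e * e = e" and "l * r = e" and "r \<in> Jideal e"
  shows "r * e = r"
proof -
  obtain p q where "r = p * (l * r) * q" using assms(2,3) unfolding Jideal_iff by blast
  then obtain u where "r = u * (p * l) * r"
    using sandwich_absorb(1)[of r "p * l" q] by (auto simp: mult.assoc)
  then have "r = (u * p) * e" using assms(2) by (simp add: mult.assoc)
  then show ?thesis using assms(1) by (metis mult.assoc)
qed

lemma Jideal_regular:
  fixes e l r g :: "'m::{monoid_mult,finite}"
  assumes "e * e = e" and "l * g * r = e" and "g \<in> Jideal e"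
  shows "g * r * l * g = g"
proof -
  obtain p q where "g = p * (l * g * r) * q" using assms(2,3) unfolding Jideal_iff by blast
  then obtain u where u: "g = u * p * (l * g)"
    using sandwich_absorb(1)[of g "p * l" "r * q"] by (auto simp: mult.assoc)
  have "e * (l * g) = l * g"
    using Jideal_left_stable[OF assms(1), of "l * g" r] assms(2) Jideal_mult_left[OF assms(3)]
    by (simp add: mult.assoc)
  then have "g * r * l * g = u * p * (l * g)"
    using assms(2) by (subst u) (simp add: mult.assoc)
  then show ?thesis using u by simp
qed

section \<open>Word representations\<close>

lemma append_eq_append_Cons_cases:
  "xs @ ys = as @ w # bs \<Longrightarrow>
    (\<exists>bs'. xs = as @ w # bs' \<and> bs = bs' @ ys) \<or> (\<exists>as'. ys = as' @ w # bs \<and> as = xs @ as')"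
  by (auto simp: append_eq_append_conv2 Cons_eq_append_conv append_eq_Cons_conv)

lemma append_eq_append_Cons2_cases:
  assumes "xs @ ys = as @ u # bs @ v # cs"
  shows "(\<exists>cs'. xs = as @ u # bs @ v # cs' \<and> cs = cs' @ ys) \<or>
         (\<exists>bs1 bs2. xs = as @ u # bs1 \<and> ys = bs2 @ v # cs \<and> bs = bs1 @ bs2) \<or>
         (\<exists>as'. ys = as' @ u # bs @ v # cs \<and> as = xs @ as')"
  using assms by (auto simp: append_eq_append_conv2 Cons_eq_append_conv append_eq_Cons_conv)

lemma map_eq_append_Cons:
  "map f xs = as @ w # bs \<Longrightarrow>
    \<exists>as' w' bs'. xs = as' @ w' # bs' \<and> as = map f as' \<and> w = f w' \<and> bs = map f bs'"
  by (simp add: map_eq_append_conv map_eq_Cons_conv) blast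

lemma map_eq_append_Cons2:
  assumes "map f xs = as @ u # bs @ v # cs"
  shows "\<exists>as' u' bs' v' cs'. xs = as' @ u' # bs' @ v' # cs' \<and> as = map f as' \<and> u = f u' \<and>
      bs = map f bs' \<and> v = f v' \<and> cs = map f cs'"
proof -
  obtain as' u' rest where 1: "xs = as' @ u' # rest" "as = map f as'" "u = f u'" "bs @ v # cs = map f rest"
    using map_eq_append_Cons[OF assms] by metis
  obtain bs' v' cs' where "rest = bs' @ v' # cs'" "bs = map f bs'" "v = f v'" "cs = map f cs'"
    using map_eq_append_Cons[OF 1(4)[symmetric]] by metis
  with 1 show ?thesis by blast
qed

text \<open>A letter (x, l, r) stands for the vertex x placed inside the factor l * r of the evaluation,
between l and r.\<close>

type_synonym 'm letter = "nat list \<times> 'm \<times> 'm"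

definition lfactor :: "'m letter \<Rightarrow> 'm" where
  "lfactor w = fst (snd w)"

definition rfactor :: "'m letter \<Rightarrow> 'm" where
  "rfactor w = snd (snd w)"

definition word_prod :: "'m::monoid_mult letter list \<Rightarrow> 'm" where
  "word_prod ws = prod_list (map (\<lambda>w. lfactor w * rfactor w) ws)"

lemma word_prod_simps [simp]:
  "word_prod [] = 1"
  "word_prod (w # ws) = lfactor w * rfactor w * word_prod ws"
  "word_prod (ws @ vs) = word_prod ws * word_prod vs"
  by (simp_all add: word_prod_def)

lemma factor_apfst [simp]: "lfactor (apfst f w) = lfactor w" "rfactor (apfst f w) = rfactor w"
  by (simp_all add: lfactor_def rfactor_def)

lemma word_prod_map_apfst [simp]: "word_prod (map (apfst f) ws) = word_prod ws"
  by (induction ws) simp_all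

definition word_labels :: "'m::monoid_mult mlg \<Rightarrow> 'm letter list \<Rightarrow> bool" where
  "word_labels G ws \<longleftrightarrow> (\<forall>as w bs. ws = as @ w # bs \<longrightarrow>
     lab G (fst w) = (word_prod as * lfactor w, rfactor w * word_prod bs))"

definition word_edges :: "('m::monoid_mult \<times> 'm \<times> 'm) set \<Rightarrow> 'm mlg \<Rightarrow> 'm letter list \<Rightarrow> bool" where
  "word_edges P G ws \<longleftrightarrow> (\<forall>as u bs v cs s t. ws = as @ u # bs @ v # cs \<longrightarrow>
     (let tr = (s * fst (lab G (fst u)), rfactor u * word_prod bs * lfactor v, snd (lab G (fst v)) * t)
      in (edg G (fst u) (fst v) s t \<longleftrightarrow> tr \<in> P) \<and> (edg G (fst v) (fst u) s t \<longleftrightarrow> tr \<in> P)))"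

definition word_repr :: "('m::monoid_mult \<times> 'm \<times> 'm) set \<Rightarrow> 'm mlg \<Rightarrow> 'm letter list \<Rightarrow> bool" where
  "word_repr P G ws \<longleftrightarrow> distinct (map fst ws) \<and> fst ` set ws = verts G \<and> ev G = word_prod ws \<and>
     word_labels G ws \<and> word_edges P G ws"

lemma word_repr_basic:
  assumes "word_repr P G ws"
  shows "distinct (map fst ws)" and "fst ` set ws = verts G" and "ev G = word_prod ws"
  using assms unfolding word_repr_def by simp_all

lemma word_repr_lab:
  assumes "word_repr P G ws" and "ws = as @ w # bs"
  shows "lab G (fst w) = (word_prod as * lfactor w, rfactor w * word_prod bs)"
  using assms unfolding word_repr_def word_labels_def by blast

lemma word_repr_edg:
  assumes "word_repr P G ws" and "ws = as @ u # bs @ v # cs"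
  shows "edg G (fst u) (fst v) s t \<longleftrightarrow>
      (s * fst (lab G (fst u)), rfactor u * word_prod bs * lfactor v, snd (lab G (fst v)) * t) \<in> P"
    and "edg G (fst v) (fst u) s t \<longleftrightarrow>
      (s * fst (lab G (fst u)), rfactor u * word_prod bs * lfactor v, snd (lab G (fst v)) * t) \<in> P"
  using assms unfolding word_repr_def word_edges_def Let_def by blast+

lemma word_repr_intro:
  assumes "distinct (map fst ws)" and "fst ` set ws = verts G" and "ev G = word_prod ws"
    and "\<And>as w bs. ws = as @ w # bs \<Longrightarrow>
      lab G (fst w) = (word_prod as * lfactor w, rfactor w * word_prod bs)"
    and "\<And>as u bs v cs s t. ws = as @ u # bs @ v # cs \<Longrightarrow>
      (edg G (fst u) (fst v) s t \<longleftrightarrow> (s * fst (lab G (fst u)), rfactor u * word_prod bs * lfactor v,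
         snd (lab G (fst v)) * t) \<in> P) \<and>
      (edg G (fst v) (fst u) s t \<longleftrightarrow> (s * fst (lab G (fst u)), rfactor u * word_prod bs * lfactor v,
         snd (lab G (fst v)) * t) \<in> P)"
  shows "word_repr P G ws"
  using assms unfolding word_repr_def word_labels_def word_edges_def Let_def by blast

lemma word_repr_lab_mult:
  assumes "word_repr P G ws" and "x \<in> verts G"
  shows "fst (lab G x) * snd (lab G x) = ev G"
proof -
  obtain w where "w \<in> set ws" "x = fst w" using assms word_repr_basic(2) by blast
  moreover obtain as bs where "ws = as @ w # bs" using calculation(1) by (meson split_list)
  ultimately show ?thesis
    using word_repr_lab[OF assms(1)] word_repr_basic(3)[OF assms(1)] by (simp add: mult.assoc)
qed

text \<open>Vertex 1 # y of a product is written Suc 0 # y below, since the simplifier rewrites the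
numeral 1 :: nat inside such lists to Suc 0.\<close>

lemma ev_bprod [simp]: "ev (bprod P A B) = ev A * ev B"
  by (simp add: bprod_def)

lemma verts_bprod [simp]: "verts (bprod P A B) = Cons 0 ` verts A \<union> Cons 1 ` verts B"
  by (simp add: bprod_def)

lemma lab_bprod [simp]:
  "lab (bprod P A B) (0 # x) = (fst (lab A x), snd (lab A x) * ev B)"
  "lab (bprod P A B) (Suc 0 # y) = (ev A * fst (lab B y), snd (lab B y))"
  by (simp_all add: bprod_def)

lemma edg_bprod [simp]:
  "edg (bprod P A B) (0 # x) (0 # x') s t = edg A x x' s (ev B * t)"
  "edg (bprod P A B) (Suc 0 # y) (Suc 0 # y') s t = edg B y y' (s * ev A) t"
  "edg (bprod P A B) (0 # x) (Suc 0 # y) s t =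
     ((s * fst (lab A x), snd (lab A x) * fst (lab B y), snd (lab B y) * t) \<in> P)"
  "edg (bprod P A B) (Suc 0 # y) (0 # x) s t =
     ((s * fst (lab A x), snd (lab A x) * fst (lab B y), snd (lab B y) * t) \<in> P)"
  by (simp_all add: bprod_def)

lemma verts_act [simp]: "verts (act a G b) = verts G"
  by (simp add: act_def)

lemma dc_adj_act: "dc_adj (act a G b) x y \<longleftrightarrow> x \<noteq> y \<and> edg G x y a b"
  by (simp add: dc_adj_def act_def)

lemma dc_adj_act_bprod [simp]:
  "dc_adj (act a (bprod P A B) b) (0 # x) (0 # x') = dc_adj (act a A (ev B * b)) x x'"
  "dc_adj (act a (bprod P A B) b) (Suc 0 # y) (Suc 0 # y') = dc_adj (act (a * ev A) B b) y y'"
  "dc_adj (act a (bprod P A B) b) (0 # x) (Suc 0 # y) =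
     ((a * fst (lab A x), snd (lab A x) * fst (lab B y), snd (lab B y) * b) \<in> P)"
  "dc_adj (act a (bprod P A B) b) (Suc 0 # y) (0 # x) =
     ((a * fst (lab A x), snd (lab A x) * fst (lab B y), snd (lab B y) * b) \<in> P)"
  by (simp_all add: dc_adj_act)

lemma iprod_Cons: "Gs \<noteq> [] \<Longrightarrow> iprod P (G # Gs) = bprod P G (iprod P Gs)"
  by (cases Gs) simp_all

lemma ev_iprod:
  assumes "e * e = e"
  shows "Gs \<noteq> [] \<Longrightarrow> \<forall>G\<in>set Gs. ev G = e \<Longrightarrow> ev (iprod P Gs) = e"
proof (induction Gs rule: induct_list012)
  case (3 G H Gs)
  have "ev G = e" using "3.prems" by simp
  moreover have "ev (iprod P (H # Gs)) = e" using "3.prems" "3.IH"(2) by simp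
  ultimately show ?case using assms by simp
qed simp_all

lemma word_labels_bprod:
  assumes A: "word_repr P A ws" and B: "word_repr P B vs"
    and split: "map (apfst (Cons 0)) ws @ map (apfst (Cons 1)) vs = as @ w # bs"
  shows "lab (bprod P A B) (fst w) = (word_prod as * lfactor w, rfactor w * word_prod bs)"
  using append_eq_append_Cons_cases[OF split]
proof (elim disjE exE conjE)
  fix bs' assume "map (apfst (Cons 0)) ws = as @ w # bs'" and "bs = bs' @ map (apfst (Cons 1)) vs"
  moreover obtain as1 w1 bs1 where ws: "ws = as1 @ w1 # bs1" and "as = map (apfst (Cons 0)) as1"
      "w = apfst (Cons 0) w1" "bs' = map (apfst (Cons 0)) bs1"
    using calculation(1) by (blast dest: map_eq_append_Cons)
  ultimately show ?thesis
    using word_repr_lab[OF A ws] word_repr_basic(3)[OF B] by (simp add: mult.assoc)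
next
  fix as' assume "map (apfst (Cons 1)) vs = as' @ w # bs" and "as = map (apfst (Cons 0)) ws @ as'"
  moreover obtain as1 w1 bs1 where vs: "vs = as1 @ w1 # bs1" and "as' = map (apfst (Cons 1)) as1"
      "w = apfst (Cons 1) w1" "bs = map (apfst (Cons 1)) bs1"
    using calculation(1) by (blast dest: map_eq_append_Cons)
  ultimately show ?thesis
    using word_repr_lab[OF B vs] word_repr_basic(3)[OF A] by (simp add: mult.assoc)
qed

lemma word_edges_bprod:
  assumes A: "word_repr P A ws" and B: "word_repr P B vs"
    and split: "map (apfst (Cons 0)) ws @ map (apfst (Cons 1)) vs = as @ u # bs @ v # cs"
    and tr: "tr = (s * fst (lab (bprod P A B) (fst u)), rfactor u * word_prod bs * lfactor v,
                   snd (lab (bprod P A B) (fst v)) * t)"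
  shows "(edg (bprod P A B) (fst u) (fst v) s t \<longleftrightarrow> tr \<in> P) \<and>
    (edg (bprod P A B) (fst v) (fst u) s t \<longleftrightarrow> tr \<in> P)"
  using append_eq_append_Cons2_cases[OF split]
proof (elim disjE exE conjE)
  fix cs' assume "map (apfst (Cons 0)) ws = as @ u # bs @ v # cs'"
  then obtain as1 u1 bs1 v1 cs1 where ws: "ws = as1 @ u1 # bs1 @ v1 # cs1"
      and "bs = map (apfst (Cons 0)) bs1" "u = apfst (Cons 0) u1" "v = apfst (Cons 0) v1"
    by (blast dest: map_eq_append_Cons2)
  then show ?thesis using word_repr_edg[OF A ws, of s "ev B * t"] tr by (simp add: mult.assoc)
next
  fix bs1 bs2 assume "map (apfst (Cons 0)) ws = as @ u # bs1" "map (apfst (Cons 1)) vs = bs2 @ v # cs"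
    and "bs = bs1 @ bs2"
  moreover obtain as1 u1 bs1' where ws: "ws = as1 @ u1 # bs1'" and "bs1 = map (apfst (Cons 0)) bs1'"
      "u = apfst (Cons 0) u1"
    using calculation(1) by (blast dest: map_eq_append_Cons)
  moreover obtain bs2' v2 cs2 where vs: "vs = bs2' @ v2 # cs2" and "bs2 = map (apfst (Cons 1)) bs2'"
      "v = apfst (Cons 1) v2"
    using calculation(2) by (blast dest: map_eq_append_Cons)
  ultimately show ?thesis
    using word_repr_lab[OF A ws] word_repr_lab[OF B vs] tr by (simp add: mult.assoc)
next
  fix as' assume "map (apfst (Cons 1)) vs = as' @ u # bs @ v # cs"
  then obtain as1 u1 bs1 v1 cs1 where vs: "vs = as1 @ u1 # bs1 @ v1 # cs1"
      and "bs = map (apfst (Cons 1)) bs1" "u = apfst (Cons 1) u1" "v = apfst (Cons 1) v1"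
    by (blast dest: map_eq_append_Cons2)
  then show ?thesis using word_repr_edg[OF B vs, of "s * ev A" t] tr by (simp add: mult.assoc)
qed

lemma word_repr_bprod:
  assumes A: "word_repr P A ws" and B: "word_repr P B vs"
  shows "word_repr P (bprod P A B) (map (apfst (Cons 0)) ws @ map (apfst (Cons 1)) vs)"
proof -
  let ?ws = "map (apfst (Cons 0)) ws @ map (apfst (Cons 1)) vs"
  note word_repr_basic[OF A] word_repr_basic[OF B]
  moreover have "fst ` set ?ws = Cons 0 ` fst ` set ws \<union> Cons 1 ` fst ` set vs"
    by (simp add: image_Un image_image)
  ultimately have "distinct (map fst ?ws)" and "fst ` set ?ws = verts (bprod P A B)"
    and "ev (bprod P A B) = word_prod ?ws"
    by (auto simp: distinct_map inj_on_def)
  then show ?thesis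
    by (rule word_repr_intro[OF _ _ _ word_labels_bprod[OF A B] word_edges_bprod[OF A B _ refl]])
qed

lemma word_repr_singleton:
  assumes "verts G = {x}" and "wf_mlg G"
  shows "word_repr P G [(x, lab G x)]"
proof (rule word_repr_intro)
  show "ev G = word_prod [(x, lab G x)]"
    using assms unfolding wf_mlg_def by (simp add: lfactor_def rfactor_def)
  show "lab G (fst w) = (word_prod as * lfactor w, rfactor w * word_prod bs)"
    if "[(x, lab G x)] = as @ w # bs" for as w bs
    using that by (cases as) (auto simp: lfactor_def rfactor_def)
qed (use assms(1) in \<open>auto dest: arg_cong[of _ _ length]\<close>)

lemma word_repr_iprod:
  "Gs \<noteq> [] \<Longrightarrow> \<forall>G\<in>set Gs. \<exists>ws. word_repr P G ws \<Longrightarrow> \<exists>ws. word_repr P (iprod P Gs) ws"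
proof (induction P Gs rule: iprod.induct)
  case (3 P G H Gs)
  then obtain ws vs where "word_repr P G ws" "word_repr P (iprod P (H # Gs)) vs" by auto
  then show ?case using word_repr_bprod by fastforce
qed simp_all

lemma Reg_word_repr: "G \<in> Reg P d \<Longrightarrow> \<exists>ws. word_repr P G ws"
proof (induction d arbitrary: G)
  case 0
  then obtain x where "verts G = {x}" "wf_mlg G" by (auto simp: card_1_singleton_iff)
  then show ?case using word_repr_singleton by blast
next
  case (Suc d)
  then have "(\<exists>G1 G2. G = bprod P G1 G2 \<and> G1 \<in> Reg P d \<and> G2 \<in> Reg P d) \<or>
      (\<exists>Gs. G = iprod P Gs \<and> Gs \<noteq> [] \<and> set Gs \<subseteq> Reg P d)"
    by auto
  then show ?case
  proof (elim disjE exE conjE)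
    fix G1 G2 assume "G = bprod P G1 G2" "G1 \<in> Reg P d" "G2 \<in> Reg P d"
    then show ?case using Suc.IH word_repr_bprod by blast
  next
    fix Gs assume "G = iprod P Gs" "Gs \<noteq> []" "set Gs \<subseteq> Reg P d"
    then show ?case using Suc.IH word_repr_iprod by blast
  qed
qed

section \<open>Junctions and idempotent cuts\<close>

definition junction :: "'m::monoid_mult \<Rightarrow> 'm letter list \<Rightarrow> 'm letter list \<Rightarrow> bool" where
  "junction e A B \<longleftrightarrow> A \<noteq> [] \<and> rfactor (last A) \<in> Jideal e \<or> B \<noteq> [] \<and> lfactor (hd B) \<in> Jideal e"

lemma junction_exists:
  fixes ws :: "'m::monoid_mult letter list"
  assumes tot: "totally_ordered_monoid TYPE('m)"
  shows "word_prod ws \<in> Jideal e \<Longrightarrow> ws \<noteq> [] \<Longrightarrow> \<exists>A B. ws = A @ B \<and> junction e A B"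
proof (induction ws)
  case (Cons w ws)
  consider "lfactor w * rfactor w \<in> Jideal e" | "ws \<noteq> []" "word_prod ws \<in> Jideal e"
    using Cons.prems totally_ordered_Jideal_factor[OF tot, of "lfactor w * rfactor w"] by force
  then show ?case
  proof cases
    case 1
    then consider "lfactor w \<in> Jideal e" | "rfactor w \<in> Jideal e"
      using totally_ordered_Jideal_factor[OF tot] by blast
    then show ?thesis
    proof cases
      case 1
      then show ?thesis by (intro exI[of _ "[]"] exI[of _ "w # ws"]) (simp add: junction_def)
    next
      case 2
      then show ?thesis by (intro exI[of _ "[w]"] exI[of _ ws]) (simp add: junction_def)
    qed
  next
    case 2
    then obtain A B where "ws = A @ B" "junction e A B"
      using Cons.IH by blast
    then show ?thesis by (intro exI[of _ "w # A"] exI[of _ B]) (auto simp: junction_def)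
  qed
qed simp

lemma Jideal_word_suffix:
  "rfactor (last ws) \<in> Jideal m \<Longrightarrow> ws = as @ w # bs \<Longrightarrow> rfactor w * word_prod bs \<in> Jideal (m::'m::monoid_mult)"
proof (cases bs rule: rev_exhaust)
  case (snoc bs' z)
  moreover assume "rfactor (last ws) \<in> Jideal m" "ws = as @ w # bs"
  ultimately show ?thesis
    using Jideal_mult_left[of "rfactor (last ws)" m "rfactor w * word_prod bs' * lfactor z"]
    by (simp add: mult.assoc)
qed simp

lemma Jideal_word_prefix:
  "lfactor (hd ws) \<in> Jideal m \<Longrightarrow> ws = as @ w # bs \<Longrightarrow> word_prod as * lfactor w \<in> Jideal (m::'m::monoid_mult)"
proof (cases as)
  case (Cons a as')
  moreover assume "lfactor (hd ws) \<in> Jideal m" "ws = as @ w # bs"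
  ultimately show ?thesis
    using Jideal_mult_right[of "lfactor (hd ws)" m "rfactor a * word_prod as' * lfactor w"]
    by (simp add: mult.assoc)
qed simp

lemma junction_Jideal:
  fixes e :: "'m::monoid_mult"
  assumes "junction e A B"
  shows junction_Jideal_suffix: "A = A1 @ u # A2 \<Longrightarrow> rfactor u * word_prod A2 * word_prod B \<in> Jideal e"
    and junction_Jideal_prefix: "B = B1 @ v # B2 \<Longrightarrow> word_prod A * (word_prod B1 * lfactor v) \<in> Jideal e"
    and junction_Jideal_span: "A = A1 @ u # A2 \<Longrightarrow> B = B1 @ v # B2 \<Longrightarrow>
      rfactor u * word_prod A2 * (word_prod B1 * lfactor v) \<in> Jideal e"
proof -
  have prod_A: "word_prod A \<in> Jideal e" if ne: "A \<noteq> []" and J: "rfactor (last A) \<in> Jideal e"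
  proof -
    obtain A' z where "A = A' @ [z]" using ne rev_exhaust by blast
    then show ?thesis
      using Jideal_mult_left[OF J, of "word_prod A' * lfactor z"] by (simp add: mult.assoc)
  qed
  have prod_B: "word_prod B \<in> Jideal e" if ne: "B \<noteq> []" and J: "lfactor (hd B) \<in> Jideal e"
  proof -
    obtain z B' where "B = z # B'" using ne list.exhaust by blast
    then show ?thesis
      using Jideal_mult_right[OF J, of "rfactor z * word_prod B'"] by (simp add: mult.assoc)
  qed
  consider "A \<noteq> []" "rfactor (last A) \<in> Jideal e" | "B \<noteq> []" "lfactor (hd B) \<in> Jideal e"
    using assms unfolding junction_def by blast
  note cases = this
  show "rfactor u * word_prod A2 * word_prod B \<in> Jideal e" if A: "A = A1 @ u # A2"
    using cases by cases (use Jideal_mult_right Jideal_word_suffix[OF _ A] Jideal_mult_left prod_B in blast)+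
  show "word_prod A * (word_prod B1 * lfactor v) \<in> Jideal e" if B: "B = B1 @ v # B2"
    using cases by cases (use Jideal_mult_right prod_A Jideal_mult_left Jideal_word_prefix[OF _ B] in blast)+
  show "rfactor u * word_prod A2 * (word_prod B1 * lfactor v) \<in> Jideal e"
    if A: "A = A1 @ u # A2" and B: "B = B1 @ v # B2"
    using cases
    by cases (use Jideal_mult_right Jideal_word_suffix[OF _ A] Jideal_mult_left Jideal_word_prefix[OF _ B] in blast)+
qed

text \<open>The vertices X come before the cut and the rest after it: G behaves like the product of
its restriction to X, a vertex-less graph evaluating to e, and its restriction to the rest.\<close>

definition idempotent_cut :: "('m::monoid_mult \<times> 'm \<times> 'm) set \<Rightarrow> 'm \<Rightarrow> 'm mlg \<Rightarrow> nat list set \<Rightarrow> bool" where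
  "idempotent_cut P e G X \<longleftrightarrow> X \<subseteq> verts G \<and>
     (\<forall>u\<in>X. snd (lab G u) * e = snd (lab G u)) \<and>
     (\<forall>v\<in>verts G - X. e * fst (lab G v) = fst (lab G v)) \<and>
     (\<forall>u\<in>X. \<forall>v\<in>verts G - X. \<forall>s t.
        let tr = (s * fst (lab G u), snd (lab G u) * e * fst (lab G v), snd (lab G v) * t)
        in (edg G u v s t \<longleftrightarrow> tr \<in> P) \<and> (edg G v u s t \<longleftrightarrow> tr \<in> P))"

lemma idempotent_cutD:
  assumes "idempotent_cut P e G X"
  shows "X \<subseteq> verts G"
    and "u \<in> X \<Longrightarrow> snd (lab G u) * e = snd (lab G u)"
    and "v \<in> verts G \<Longrightarrow> v \<notin> X \<Longrightarrow> e * fst (lab G v) = fst (lab G v)"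
    and "u \<in> X \<Longrightarrow> v \<in> verts G \<Longrightarrow> v \<notin> X \<Longrightarrow>
      edg G u v s t \<longleftrightarrow> (s * fst (lab G u), snd (lab G u) * e * fst (lab G v), snd (lab G v) * t) \<in> P"
    and "u \<in> X \<Longrightarrow> v \<in> verts G \<Longrightarrow> v \<notin> X \<Longrightarrow>
      edg G v u s t \<longleftrightarrow> (s * fst (lab G u), snd (lab G u) * e * fst (lab G v), snd (lab G v) * t) \<in> P"
  using assms unfolding idempotent_cut_def Let_def by blast+

lemma word_repr_junction_middle:
  fixes G :: "'m::{monoid_mult,finite} mlg"
  assumes idem: "e * e = e" and repr: "word_repr P G (A @ B)" and ev: "ev G = e"
    and junction: "junction e A B" and A: "A = A1 @ u # A2" and B: "B = B1 @ v # B2"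
  shows "snd (lab G (fst u)) * e * fst (lab G (fst v)) = rfactor u * word_prod (A2 @ B1) * lfactor v"
proof -
  define g where "g = rfactor u * word_prod A2 * (word_prod B1 * lfactor v)"
  define l where "l = word_prod A1 * lfactor u"
  define r where "r = rfactor v * word_prod B2"
  have lab_u: "snd (lab G (fst u)) = g * r"
    using word_repr_lab[OF repr, of A1 u "A2 @ B"] A B unfolding g_def r_def by (simp add: mult.assoc)
  have lab_v: "fst (lab G (fst v)) = l * g"
    using word_repr_lab[OF repr, of "A @ B1" v B2] A B unfolding g_def l_def by (simp add: mult.assoc)
  have "l * g * r = e"
    using word_repr_basic(3)[OF repr] ev A B unfolding g_def l_def r_def by (simp add: mult.assoc)
  then have "l * g * (r * e) = e"
    using idem by (simp flip: mult.assoc)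
  then have "g * (r * e) * l * g = g"
    using Jideal_regular[OF idem _ junction_Jideal_span[OF junction A B]] unfolding g_def by blast
  then show ?thesis
    unfolding lab_u lab_v by (simp add: g_def mult.assoc)
qed

lemma idempotent_cut_of_junction:
  fixes G :: "'m::{monoid_mult,finite} mlg"
  assumes idem: "e * e = e" and repr: "word_repr P G (A @ B)" and ev: "ev G = e"
    and junction: "junction e A B"
  shows "idempotent_cut P e G (fst ` set A)"
proof -
  have vs: "verts G = fst ` set A \<union> fst ` set B"
    using word_repr_basic(2)[OF repr] by auto
  have lr: "fst (lab G x) * snd (lab G x) = e" if "x \<in> verts G" for x
    using word_repr_lab_mult[OF repr that] ev by simp
  have edges:
    "edg G x y s t \<longleftrightarrow> (s * fst (lab G x), snd (lab G x) * e * fst (lab G y), snd (lab G y) * t) \<in> P"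
    "edg G y x s t \<longleftrightarrow> (s * fst (lab G x), snd (lab G x) * e * fst (lab G y), snd (lab G y) * t) \<in> P"
    if X: "x \<in> fst ` set A" and Y: "y \<in> verts G - fst ` set A" for x y s t
  proof -
    obtain A1 u A2 where A: "A = A1 @ u # A2" and x: "x = fst u"
      using X by (metis imageE split_list)
    obtain B1 v B2 where B: "B = B1 @ v # B2" and y: "y = fst v"
      using Y vs by (metis DiffE UnE imageE split_list)
    have "A @ B = A1 @ u # (A2 @ B1) @ v # B2" using A B by simp
    then show "edg G x y s t \<longleftrightarrow> (s * fst (lab G x), snd (lab G x) * e * fst (lab G y), snd (lab G y) * t) \<in> P"
      "edg G y x s t \<longleftrightarrow> (s * fst (lab G x), snd (lab G x) * e * fst (lab G y), snd (lab G y) * t) \<in> P"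
      using word_repr_edg[OF repr, of A1 u "A2 @ B1" v B2 s t] x y
        word_repr_junction_middle[OF idem repr ev junction A B] by simp_all
  qed
  show ?thesis
    unfolding idempotent_cut_def Let_def
  proof (intro conjI ballI allI)
    show "fst ` set A \<subseteq> verts G" using vs by blast
  next
    fix x assume x: "x \<in> fst ` set A"
    then obtain A1 u A2 where A: "A = A1 @ u # A2" and "x = fst u" by (metis imageE split_list)
    then have "snd (lab G x) \<in> Jideal e"
      using junction_Jideal_suffix[OF junction A] word_repr_lab[OF repr, of A1 u "A2 @ B"]
      by (simp add: mult.assoc)
    moreover have "x \<in> verts G" using vs x by blast
    ultimately show "snd (lab G x) * e = snd (lab G x)"
      using Jideal_right_stable[OF idem lr] by blast
  next
    fix x assume x: "x \<in> verts G - fst ` set A"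
    then obtain B1 v B2 where B: "B = B1 @ v # B2" and "x = fst v"
      using vs by (metis DiffE UnE imageE split_list)
    then have "fst (lab G x) \<in> Jideal e"
      using junction_Jideal_prefix[OF junction B] word_repr_lab[OF repr, of "A @ B1" v B2]
      by (simp add: mult.assoc)
    moreover have "x \<in> verts G" using x by blast
    ultimately show "e * fst (lab G x) = fst (lab G x)"
      using Jideal_left_stable[OF idem lr] by blast
  next
    fix x y s t assume "x \<in> fst ` set A" "y \<in> verts G - fst ` set A"
    then show "edg G x y s t \<longleftrightarrow> (s * fst (lab G x), snd (lab G x) * e * fst (lab G y), snd (lab G y) * t) \<in> P"
      and "edg G y x s t \<longleftrightarrow> (s * fst (lab G x), snd (lab G x) * e * fst (lab G y), snd (lab G y) * t) \<in> P"
      by (rule edges)+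
  qed
qed

lemma exists_idempotent_cut:
  fixes G :: "'m::{monoid_mult,finite} mlg"
  assumes tot: "totally_ordered_monoid TYPE('m)" and idem: "e * e = e"
    and repr: "word_repr P G ws" and ev: "ev G = e"
  shows "\<exists>X. idempotent_cut P e G X"
proof (cases "ws = []")
  case True
  then have "verts G = {}" using word_repr_basic(2)[OF repr] by simp
  then have "idempotent_cut P e G {}" unfolding idempotent_cut_def by simp
  then show ?thesis ..
next
  case False
  have "word_prod ws \<in> Jideal e" using word_repr_basic(3)[OF repr] ev Jideal_self by metis
  then obtain A B where "ws = A @ B" and "junction e A B"
    using junction_exists[OF tot] False by blast
  then have "idempotent_cut P e G (fst ` set A)"
    using idempotent_cut_of_junction[OF idem _ ev] repr by simp
  then show ?thesis ..
qed

section \<open>Splitting a path at a cut\<close>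

definition lift_map :: "(nat list \<Rightarrow> nat list) \<Rightarrow> nat list \<Rightarrow> nat list" where
  "lift_map h v = (if hd v = 0 then v else 1 # h (tl v))"

lemma verts_bprod_cases:
  assumes "v \<in> verts (bprod P A B)"
  obtains x where "x \<in> verts A" "v = 0 # x" | y where "y \<in> verts B" "v = Suc 0 # y"
  using assms by auto

lemma dc_embedding_bprod_right:
  assumes emb: "dc_embedding (act (a * ev A) B b) (act (a * ev A) B' b) h"
    and ev: "ev B' = ev B" and lab: "\<forall>y\<in>verts B. lab B' (h y) = lab B y"
  shows "dc_embedding (act a (bprod P A B) b) (act a (bprod P A B') b) (lift_map h)"
proof -
  have maps: "\<forall>y\<in>verts B. h y \<in> verts B'" and inj: "inj_on h (verts B)"
    and adj: "\<forall>y\<in>verts B. \<forall>y'\<in>verts B. dc_adj (act (a * ev A) B b) y y' \<longleftrightarrow>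
        dc_adj (act (a * ev A) B' b) (h y) (h y')"
    using emb unfolding dc_embedding_def by auto
  have [simp]: "lift_map h (0 # x) = 0 # x" "lift_map h (Suc 0 # y) = Suc 0 # h y" for x y
    by (simp_all add: lift_map_def)
  show ?thesis
    unfolding dc_embedding_def verts_act
  proof (intro conjI ballI inj_onI)
    fix v assume "v \<in> verts (bprod P A B)"
    then show "lift_map h v \<in> verts (bprod P A B')"
      using maps by (cases rule: verts_bprod_cases) auto
  next
    fix v w assume "v \<in> verts (bprod P A B)" "w \<in> verts (bprod P A B)" "lift_map h v = lift_map h w"
    then show "v = w"
      using inj by (cases rule: verts_bprod_cases; cases rule: verts_bprod_cases) (auto dest: inj_onD)
  next
    fix v w assume "v \<in> verts (bprod P A B)" "w \<in> verts (bprod P A B)"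
    then show "dc_adj (act a (bprod P A B) b) v w \<longleftrightarrow>
        dc_adj (act a (bprod P A B') b) (lift_map h v) (lift_map h w)"
      using adj lab ev by (cases rule: verts_bprod_cases; cases rule: verts_bprod_cases) auto
  qed
qed

text \<open>In G \<odot> T the vertices are 0 # x and 1 # z; in X \<odot> (E \<odot> (Y \<odot> T)) the vertices of Y are
1 # 1 # 0 # y and those of T are 1 # 1 # 1 # z.\<close>

definition cut_map :: "nat list set \<Rightarrow> nat list \<Rightarrow> nat list" where
  "cut_map X v = (if hd v = 0 then (if tl v \<in> X then v else [1, 1, 0] @ tl v) else [1, 1, 1] @ tl v)"

lemma cut_map_simps [simp]:
  "cut_map X (0 # x) = (if x \<in> X then 0 # x else Suc 0 # Suc 0 # 0 # x)"
  "cut_map X (Suc 0 # z) = Suc 0 # Suc 0 # Suc 0 # z"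
  by (simp_all add: cut_map_def)

lemma verts_bprod_cut_cases:
  assumes "v \<in> verts (bprod P G T)"
  obtains (kept) x where "x \<in> X" "v = 0 # x"
    | (moved) y where "y \<in> verts G" "y \<notin> X" "v = 0 # y"
    | (tail) z where "z \<in> verts T" "v = Suc 0 # z"
  using assms by auto

text \<open>The hypothesis a * e = a holds because, inside a path, the left context of G is a product
ending with a factor that evaluates to e.\<close>

lemma dc_embedding_cut_map:
  fixes G T :: "'m::monoid_mult mlg"
  assumes cut: "idempotent_cut P e G X" and idem: "e * e = e" and ev: "ev G = e" "ev T = e"
    and a: "a * e = a"
  defines "H \<equiv> bprod P (G\<lparr>verts := X\<rparr>) (bprod P (G\<lparr>verts := {}\<rparr>) (bprod P (G\<lparr>verts := verts G - X\<rparr>) T))"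
  shows "dc_embedding (act a (bprod P G T) b) (act a H b) (cut_map X)"
    and "\<forall>v\<in>verts (bprod P G T). lab H (cut_map X v) = lab (bprod P G T) v"
proof -
  note X = idempotent_cutD[OF cut]
  have absorb: "e * (e * z) = e * z" "a * (e * z) = a * z" for z
    using idem a by (simp_all flip: mult.assoc)
  have absorb_X: "snd (lab G u) * (e * z) = snd (lab G u) * z" if "u \<in> X" for u z
    using X(2)[OF that] by (simp flip: mult.assoc)
  have absorb_Y: "e * (fst (lab G v) * z) = fst (lab G v) * z" if "v \<in> verts G" "v \<notin> X" for v z
    using X(3)[OF that] by (simp flip: mult.assoc)
  note simps = idem ev a X(2-5) mult.assoc absorb absorb_X absorb_Y
  show "\<forall>v\<in>verts (bprod P G T). lab H (cut_map X v) = lab (bprod P G T) v"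
  proof
    fix v assume "v \<in> verts (bprod P G T)"
    then show "lab H (cut_map X v) = lab (bprod P G T) v"
      unfolding H_def by (cases rule: verts_bprod_cut_cases[where X = X]) (simp_all add: simps)
  qed
  show "dc_embedding (act a (bprod P G T) b) (act a H b) (cut_map X)"
    unfolding dc_embedding_def verts_act
  proof (intro conjI ballI inj_onI)
    fix v assume "v \<in> verts (bprod P G T)"
    then show "cut_map X v \<in> verts H"
      using X(1) unfolding H_def by (cases rule: verts_bprod_cut_cases[where X = X]) auto
  next
    fix v w assume "v \<in> verts (bprod P G T)" and "w \<in> verts (bprod P G T)"
      and "cut_map X v = cut_map X w"
    then show "v = w" by (auto split: if_splits)
  next
    fix v w assume v: "v \<in> verts (bprod P G T)" and w: "w \<in> verts (bprod P G T)"
    have neq: "x \<noteq> y" "y \<noteq> x" if "x \<in> X" "y \<notin> X" for x y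
      using that by blast+
    show "dc_adj (act a (bprod P G T) b) v w \<longleftrightarrow> dc_adj (act a H b) (cut_map X v) (cut_map X w)"
      unfolding H_def
      by (rule verts_bprod_cut_cases[OF v, where X = X]; rule verts_bprod_cut_cases[OF w, where X = X])
        (simp_all add: dc_adj_act simps neq)
  qed
qed

definition cut_path :: "'m mlg \<Rightarrow> 'm mlg \<Rightarrow> nat list set \<Rightarrow> 'm mlg list \<Rightarrow> 'm mlg list" where
  "cut_path G1 G2 X rest =
     G1 # G2\<lparr>verts := X\<rparr> # G2\<lparr>verts := {}\<rparr> # G2\<lparr>verts := verts G2 - X\<rparr> # rest"

lemma dc_embedding_cut_path:
  assumes cut: "idempotent_cut P e G2 X" and idem: "e * e = e"
    and ev: "ev G1 = e" "ev G2 = e" "\<forall>G\<in>set rest. ev G = e" and rest: "rest \<noteq> []"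
  shows "dc_embedding (act a (iprod P (G1 # G2 # rest)) b) (act a (iprod P (cut_path G1 G2 X rest)) b)
    (lift_map (cut_map X))"
proof -
  have evT: "ev (iprod P rest) = e" using ev_iprod[OF idem rest ev(3)] .
  have "a * ev G1 * e = a * ev G1" using idem ev by (simp add: mult.assoc)
  note cut_emb = dc_embedding_cut_map[OF cut idem ev(2) evT this]
  have "iprod P (G1 # G2 # rest) = bprod P G1 (bprod P G2 (iprod P rest))"
    and "iprod P (cut_path G1 G2 X rest) = bprod P G1 (bprod P (G2\<lparr>verts := X\<rparr>)
      (bprod P (G2\<lparr>verts := {}\<rparr>) (bprod P (G2\<lparr>verts := verts G2 - X\<rparr>) (iprod P rest))))"
    using rest by (simp_all add: cut_path_def iprod_Cons)
  then show ?thesis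
    by (simp only:) (rule dc_embedding_bprod_right[OF cut_emb(1) _ cut_emb(2)], simp add: idem ev evT)
qed

lemma vpos_0: "Suc 0 < m \<Longrightarrow> vpos m 0 x = 0 # x"
  by (auto dest: less_imp_Suc_add)

lemma vpos_Suc: "i < m \<Longrightarrow> vpos (Suc m) (Suc i) x = Suc 0 # vpos m i x"
  by (cases m) auto

lemma vpos_cut_path:
  fixes G1 G2 :: "'m mlg" and rest :: "'m mlg list" and X :: "nat list set"
  defines "Gs \<equiv> G1 # G2 # rest" and "Hs \<equiv> cut_path G1 G2 X rest"
  assumes rest: "rest \<noteq> []" and i: "i < length Gs" and x: "x \<in> verts (Gs ! i)"
  shows "\<exists>j<length Hs. x \<in> verts (Hs ! j) \<and> lab (Hs ! j) x = lab (Gs ! i) x \<and>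
      lift_map (cut_map X) (vpos (length Gs) i x) = vpos (length Hs) j x \<and>
      (i = 0 \<longrightarrow> j = 0) \<and> (i = length Gs - 1 \<longrightarrow> j = length Hs - 1)"
proof -
  define n where "n = length rest"
  have lens: "length Gs = Suc (Suc n)" "length Hs = Suc (Suc (Suc (Suc n)))" "0 < n"
    using rest unfolding Gs_def Hs_def cut_path_def n_def by simp_all
  have h: "lift_map (cut_map X) (0 # x) = 0 # x"
    "lift_map (cut_map X) (Suc 0 # 0 # x) =
      (if x \<in> X then Suc 0 # 0 # x else Suc 0 # Suc 0 # Suc 0 # 0 # x)"
    "lift_map (cut_map X) (Suc 0 # Suc 0 # z) = Suc 0 # Suc 0 # Suc 0 # Suc 0 # z" for x z
    by (simp_all add: lift_map_def)
  consider "i = 0" | "i = 1" | i' where "i = Suc (Suc i')" "i' < n"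
    using i lens by (metis One_nat_def less_Suc_eq_0_disj Suc_less_SucD)
  then show ?thesis
  proof cases
    case 1
    then show ?thesis using i x lens
      by (intro exI[of _ 0]) (simp add: Gs_def Hs_def cut_path_def vpos_0 h)
  next
    case 2
    show ?thesis
    proof (cases "x \<in> X")
      case True
      then show ?thesis using i x lens 2
        by (intro exI[of _ 1]) (simp add: Gs_def Hs_def cut_path_def vpos_0 vpos_Suc h)
    next
      case False
      then show ?thesis using i x lens 2
        by (intro exI[of _ 3]) (simp add: Gs_def Hs_def cut_path_def vpos_0 vpos_Suc h numeral_eq_Suc)
    qed
  next
    case 3
    then show ?thesis using i x lens
      by (intro exI[of _ "Suc (Suc (Suc (Suc i')))"]) (simp add: Gs_def Hs_def cut_path_def vpos_Suc h)
  qed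
qed

lemma wf_mlg_restrict: "wf_mlg G \<Longrightarrow> V \<subseteq> verts G \<Longrightarrow> wf_mlg (G\<lparr>verts := V\<rparr>)"
  unfolding wf_mlg_def by (auto intro: finite_subset)

lemma good_forest_path_of_cut:
  assumes fp: "forest_path (G1 # G2 # rest)" and rest: "rest \<noteq> []"
    and cut: "idempotent_cut P (ev G2) G2 X"
  shows "good_forest_path P (G1 # G2 # rest)"
proof -
  define Gs where "Gs = G1 # G2 # rest"
  define Hs where "Hs = cut_path G1 G2 X rest"
  define h where "h = lift_map (cut_map X)"
  obtain e where idem: "e * e = e" and ev: "\<forall>G\<in>set Gs. ev G = e" and wf: "\<forall>G\<in>set Gs. wf_mlg G"
    using fp unfolding forest_path_def Gs_def by blast
  have ev': "ev G1 = e" "ev G2 = e" "\<forall>G\<in>set rest. ev G = e"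
    and wf': "wf_mlg G1" "wf_mlg G2" "\<forall>G\<in>set rest. wf_mlg G"
    using ev wf unfolding Gs_def by simp_all
  have "Hs \<noteq> []" by (simp add: Hs_def cut_path_def)
  moreover have "\<forall>H\<in>set Hs. wf_mlg H \<and> ev H = ev (hd Gs)"
    using ev' wf' idempotent_cutD(1)[OF cut] wf_mlg_restrict[of G2]
    unfolding Hs_def Gs_def cut_path_def by auto
  moreover have "dc_embedding (act a (iprod P Gs) b) (act a (iprod P Hs) b) h" for a b
    using dc_embedding_cut_path[OF cut[unfolded ev'(2)] idem ev' rest]
    unfolding Gs_def Hs_def h_def .
  moreover have pos: "\<exists>j<length Hs. x \<in> verts (Hs ! j) \<and> lab (Hs ! j) x = lab (Gs ! i) x \<and>
      h (vpos (length Gs) i x) = vpos (length Hs) j x \<and>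
      (i = 0 \<longrightarrow> j = 0) \<and> (i = length Gs - 1 \<longrightarrow> j = length Hs - 1)"
    if "i < length Gs" "x \<in> verts (Gs ! i)" for i x
    using vpos_cut_path[OF rest] that unfolding Gs_def Hs_def h_def by blast
  then have "\<forall>i<length Gs. \<forall>x\<in>verts (Gs ! i). \<exists>j<length Hs. \<exists>y\<in>verts (Hs ! j).
      h (vpos (length Gs) i x) = vpos (length Hs) j y \<and> lab (Hs ! j) y = lab (Gs ! i) x"
    by blast
  moreover have "0 < length Gs" by (simp add: Gs_def)
  then have "\<forall>x\<in>verts (Gs ! 0). \<exists>y\<in>verts (Hs ! 0). h (vpos (length Gs) 0 x) = vpos (length Hs) 0 y"
    using pos[of 0] by fastforce
  moreover have "length Gs - 1 < length Gs" by (simp add: Gs_def)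
  then have "\<forall>x\<in>verts (Gs ! (length Gs - 1)). \<exists>y\<in>verts (Hs ! (length Hs - 1)).
      h (vpos (length Gs) (length Gs - 1) x) = vpos (length Hs) (length Hs - 1) y"
    using pos[of "length Gs - 1"] by fastforce
  moreover have "\<exists>j<length Hs. \<forall>y\<in>verts (Hs ! j). vpos (length Hs) j y \<notin> h ` verts (iprod P Gs)"
    by (intro exI[of _ 2]) (simp add: Hs_def cut_path_def)
  ultimately show ?thesis
    unfolding good_forest_path_def Let_def Gs_def[symmetric]
    by (intro allI exI[of _ Hs] exI[of _ h]) (intro conjI; assumption)
qed

theorem lemma4p5:
  fixes P :: "('m::{monoid_mult, finite} \<times> 'm \<times> 'm) set"
    and d :: nat
    and Gs :: "'m mlg list"
  assumes "totally_ordered_monoid TYPE('m)"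
    and "length Gs > 2"
    and "set Gs \<subseteq> Reg P d"
  shows "\<not> bad_forest_path P Gs"
proof
  assume "bad_forest_path P Gs"
  then have fp: "forest_path Gs" and not_good: "\<not> good_forest_path P Gs"
    unfolding bad_forest_path_def by auto
  obtain G1 G2 rest where Gs: "Gs = G1 # G2 # rest" and rest: "rest \<noteq> []"
    using assms(2) by (cases Gs; cases "tl Gs"; cases "tl (tl Gs)") auto
  obtain e where idem: "e * e = e" and ev: "ev G2 = e"
    using fp unfolding forest_path_def Gs by auto
  have "G2 \<in> Reg P d" using assms(3) unfolding Gs by simp
  then obtain ws where "word_repr P G2 ws" using Reg_word_repr by blast
  then obtain X where "idempotent_cut P (ev G2) G2 X"
    using exists_idempotent_cut[OF assms(1) idem _ ev] ev by blast
  then have "good_forest_path P Gs"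
    using good_forest_path_of_cut fp rest unfolding Gs by blast
  with not_good show False ..
qed

end
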